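(* Let $n$ views be given, view $i$ containing $m_i$ items, and let $l=\sum_{i=1}^n m_i$. Let $\tilde P\in\{0,1\}^{l\times l}$ be a noisy aggregate association matrix (block $(i,j)$ is $\tilde P^i_j\in\{0,1\}^{m_i\times m_j}$, with $\tilde P^i_i=I$), let $\tilde C$ be the diagonal matrix whose $k$-th diagonal entry is the $k$-th row sum of $\tilde P$, let $\tilde L=\tilde C-\tilde P$, $\tilde P_{\mathrm{nrm}}=\tilde C^{-1/2}\tilde P\tilde C^{-1/2}$ and $\tilde L_{\mathrm{nrm}}=\tilde C^{-1/2}\tilde L\tilde C^{-1/2}$. Consider Problem 1: $$\max_{P^i_j\in\mathbb P}\ \langle P_{\mathrm{nrm}},\tilde P_{\mathrm{nrm}}\rangle\quad\text{subject to } P=VV^\top,\ V\in\mathbb V,$$ where $P$ is the aggregate matrix with blocks $P^i_j$, $C$ is the diagonal matrix of row sums of $P$, and $P_{\mathrm{nrm}}=C^{-1/2}PC^{-1/2}$. Then Problem 1 is equivalent to the program $$\min_{U\in\mathbb U}\ \mathrm{tr}\big(U^\top\tilde L_{\mathrm{nrm}}U\big),$$ where $\mathbb U=\{U: U=C^{-1/2}V,\ V\in\mathbb V\}$ (with $C$ the diagonal row-sum matrix of $VV^\top$), in the sense that $V$ is optimal for Problem 1 if and only if $U=C^{-1/2}V$ is optimal for the latter program; moreover every $U\in\mathbb U$ satisfies $U^\top U=I$.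
   Context: A partial permutation matrix is a $0/1$ matrix in which each row and each column contains at most one entry equal to $1$; $\mathbb P$ denotes the set of all such matrices. A lifting permutation matrix $P^i\in\{0,1\}^{m_i\times m}$ is a $0/1$ matrix each of whose rows contains exactly one entry equal to $1$ and each of whose columns contains at most one entry equal to $1$. $\mathbb V$ is the set of matrices $V=[P^{1\top}\ P^{2\top}\ \cdots\ P^{n\top}]^\top\in\{0,1\}^{l\times m}$ with each $P^i$ a lifting permutation matrix, where $m$ (the size of the universe) is the number of distinct items, so that every column of $V$ contains at least one entry equal to $1$. $\langle A,B\rangle=\mathrm{tr}(A^\top B)$ is the Frobenius inner product. *)

theory Defs
  imports "Jordan_Normal_Form.Matrix"
begin

text \<open>Matrices of varying dimensions are Jordan_Normal_Form matrices over the reals.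
  The view sizes m_1..m_n are the list ms, n = length ms, l = sum_list ms.\<close>

definition mtrace :: "real mat \<Rightarrow> real" where
  "mtrace A = (\<Sum>i<dim_row A. A $$ (i, i))"

definition frob :: "real mat \<Rightarrow> real mat \<Rightarrow> real" where
  "frob A B = mtrace (A\<^sup>T * B)"

definition zero_one_mat :: "real mat \<Rightarrow> bool" where
  "zero_one_mat A \<longleftrightarrow> (\<forall>i<dim_row A. \<forall>j<dim_col A. A $$ (i, j) \<in> {0, 1})"

definition partial_perm_mat :: "real mat \<Rightarrow> bool" where
  "partial_perm_mat A \<longleftrightarrow> zero_one_mat A \<and>
     (\<forall>i<dim_row A. card {j. j < dim_col A \<and> A $$ (i, j) = 1} \<le> 1) \<and>
     (\<forall>j<dim_col A. card {i. i < dim_row A \<and> A $$ (i, j) = 1} \<le> 1)"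

definition lifting_perm_mat :: "real mat \<Rightarrow> bool" where
  "lifting_perm_mat A \<longleftrightarrow> zero_one_mat A \<and>
     (\<forall>i<dim_row A. card {j. j < dim_col A \<and> A $$ (i, j) = 1} = 1) \<and>
     (\<forall>j<dim_col A. card {i. i < dim_row A \<and> A $$ (i, j) = 1} \<le> 1)"

definition offs :: "nat list \<Rightarrow> nat \<Rightarrow> nat" where
  "offs ms i = sum_list (take i ms)"

definition blk :: "nat list \<Rightarrow> real mat \<Rightarrow> nat \<Rightarrow> nat \<Rightarrow> real mat" where
  "blk ms A i j = mat (ms ! i) (ms ! j) (\<lambda>(r, c). A $$ (offs ms i + r, offs ms j + c))"

definition rowblk :: "nat list \<Rightarrow> real mat \<Rightarrow> nat \<Rightarrow> real mat" where
  "rowblk ms V i = mat (ms ! i) (dim_col V) (\<lambda>(r, c). V $$ (offs ms i + r, c))"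

definition in_VV :: "nat list \<Rightarrow> nat \<Rightarrow> real mat \<Rightarrow> bool" where
  "in_VV ms m V \<longleftrightarrow> dim_row V = sum_list ms \<and> dim_col V = m \<and>
     (\<forall>i<length ms. lifting_perm_mat (rowblk ms V i)) \<and>
     (\<forall>c<m. \<exists>k<dim_row V. V $$ (k, c) = 1)"

definition rowsum_diag :: "real mat \<Rightarrow> real mat" where
  "rowsum_diag A = mat (dim_row A) (dim_row A)
     (\<lambda>(i, j). if i = j then (\<Sum>k<dim_col A. A $$ (i, k)) else 0)"

definition diag_inv_sqrt :: "real mat \<Rightarrow> real mat" where
  "diag_inv_sqrt C = mat (dim_row C) (dim_row C)
     (\<lambda>(i, j). if i = j then 1 / sqrt (C $$ (i, i)) else 0)"

definition nrm :: "real mat \<Rightarrow> real mat" where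
  "nrm A = diag_inv_sqrt (rowsum_diag A) * A * diag_inv_sqrt (rowsum_diag A)"

definition lap_nrm :: "real mat \<Rightarrow> real mat" where
  "lap_nrm A = diag_inv_sqrt (rowsum_diag A) * (rowsum_diag A - A) * diag_inv_sqrt (rowsum_diag A)"

definition U_of :: "real mat \<Rightarrow> real mat" where
  "U_of V = diag_inv_sqrt (rowsum_diag (V * V\<^sup>T)) * V"

definition UU :: "nat list \<Rightarrow> nat \<Rightarrow> real mat set" where
  "UU ms m = {U_of V | V. in_VV ms m V}"

definition feasible1 :: "nat list \<Rightarrow> nat \<Rightarrow> real mat \<Rightarrow> bool" where
  "feasible1 ms m V \<longleftrightarrow> in_VV ms m V \<and>
     (\<forall>i<length ms. \<forall>j<length ms. partial_perm_mat (blk ms (V * V\<^sup>T) i j))"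

definition obj1 :: "real mat \<Rightarrow> real mat \<Rightarrow> real" where
  "obj1 Pt V = frob (nrm (V * V\<^sup>T)) (nrm Pt)"

definition obj2 :: "real mat \<Rightarrow> real mat \<Rightarrow> real" where
  "obj2 Pt U = mtrace (U\<^sup>T * lap_nrm Pt * U)"

end

theory Submission
  imports Defs
begin

(* Every V in the set V is the 0/1 matrix of a surjection f from the l rows onto the m items.
   Hence V V^T is the indicator of f k = f k', its blocks are automatically partial permutations
   (so every V in V is feasible for Problem 1), and its row-sum matrix C is diagonal with the fibre
   sizes of f. Consequently U = C^(-1/2) V has orthonormal columns and P_nrm = U U^T.
   Each row of the noisy matrix contains the 1 of its identity diagonal block, so its row sums are
   positive and L_nrm = I - P_nrm for it. By cyclicity of the trace the objective of Problem 1 is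
   tr (U^T P_nrm U) = m - tr (U^T L_nrm U): the two programs differ by a sign and a constant. *)

lemma offs_Cons_0 [simp]: "offs (a # ms) 0 = 0"
  by (simp add: offs_def)

lemma offs_Cons_Suc [simp]: "offs (a # ms) (Suc i) = a + offs ms i"
  by (simp add: offs_def)

lemma offs_add_nth_le_sum_list: "i < length ms \<Longrightarrow> offs ms i + ms ! i \<le> sum_list ms"
  by (induction ms arbitrary: i) (auto simp: less_Suc_eq_0_disj)

lemma index_in_block:
  assumes "k < sum_list ms"
  obtains i r where "i < length ms" "r < ms ! i" "k = offs ms i + r"
  using assms
proof (induction ms arbitrary: k thesis)
  case Nil
  then show ?case by simp
next
  case (Cons a ms)
  show ?case
  proof (cases "k < a")
    case True
    then show ?thesis using Cons.prems(1)[of 0 k] by simp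
  next
    case False
    with Cons.prems(2) have "k - a < sum_list ms" by simp
    then obtain i r where "i < length ms" "r < ms ! i" "k - a = offs ms i + r"
      using Cons.IH by blast
    then show ?thesis using False Cons.prems(1)[of "Suc i" r] by simp
  qed
qed

lemma rowsum_diag_eq_mat_diag:
  "rowsum_diag A = mat_diag (dim_row A) (\<lambda>i. \<Sum>k<dim_col A. A $$ (i, k))"
  by (rule eq_matI) (auto simp: rowsum_diag_def mat_diag_def)

lemma diag_inv_sqrt_mat_diag:
  "diag_inv_sqrt (mat_diag n d) = mat_diag n (\<lambda>i. 1 / sqrt (d i))"
  by (rule eq_matI) (auto simp: diag_inv_sqrt_def mat_diag_def)

lemma transpose_mat_diag [simp]: "(mat_diag n d)\<^sup>T = mat_diag n d"
  by (rule eq_matI) (auto simp: mat_diag_def)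

lemma lap_nrm_eq_one_minus_nrm:
  assumes A: "A \<in> carrier_mat n n" and pos: "\<And>i. i < n \<Longrightarrow> (\<Sum>k<n. A $$ (i, k)) > 0"
  shows "lap_nrm A = 1\<^sub>m n - nrm A"
proof -
  define d where "d = (\<lambda>i. \<Sum>k<n. A $$ (i, k))"
  define E where "E = mat_diag n (\<lambda>i. 1 / sqrt (d i))"
  have R: "rowsum_diag A = mat_diag n d"
    using A by (simp add: rowsum_diag_eq_mat_diag d_def)
  have EE: "diag_inv_sqrt (mat_diag n d) = E"
    by (simp add: diag_inv_sqrt_mat_diag E_def)
  have E: "E \<in> carrier_mat n n" by (simp add: E_def)
  have "E * mat_diag n d * E = mat_diag n (\<lambda>i. 1 / sqrt (d i) * d i * (1 / sqrt (d i)))"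
    by (simp add: E_def)
  also have "\<dots> = 1\<^sub>m n"
    by (rule eq_matI) (auto simp: mat_diag_def d_def real_sqrt_mult[symmetric] dest: pos)
  finally have ERE: "E * mat_diag n d * E = 1\<^sub>m n" .
  have "lap_nrm A = E * (mat_diag n d - A) * E"
    by (simp add: lap_nrm_def R EE)
  also have "\<dots> = (E * mat_diag n d - E * A) * E"
    using A E by (subst mult_minus_distrib_mat[of _ n n]) auto
  also have "\<dots> = E * mat_diag n d * E - E * A * E"
    by (rule minus_mult_distrib_mat[of _ n n]) (use A E in auto)
  finally show ?thesis by (simp add: ERE nrm_def R EE)
qed

lemma mtrace_mult_comm:
  assumes "A \<in> carrier_mat n k" "B \<in> carrier_mat k n"
  shows "mtrace (A * B) = mtrace (B * A)"
proof -
  have "mtrace (A * B) = (\<Sum>i<n. \<Sum>j<k. A $$ (i, j) * B $$ (j, i))"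
    using assms by (simp add: mtrace_def scalar_prod_def atLeast0LessThan)
  also have "\<dots> = (\<Sum>j<k. \<Sum>i<n. B $$ (j, i) * A $$ (i, j))"
    by (subst sum.swap) (simp add: mult.commute)
  also have "\<dots> = mtrace (B * A)"
    using assms by (simp add: mtrace_def scalar_prod_def atLeast0LessThan)
  finally show ?thesis .
qed

lemma mtrace_minus:
  "A \<in> carrier_mat n n \<Longrightarrow> B \<in> carrier_mat n n \<Longrightarrow> mtrace (A - B) = mtrace A - mtrace B"
  by (simp add: mtrace_def sum_subtractf)

lemma mtrace_one [simp]: "mtrace (1\<^sub>m n) = real n"
  by (simp add: mtrace_def)

definition assign_mat :: "nat \<Rightarrow> nat \<Rightarrow> (nat \<Rightarrow> nat) \<Rightarrow> real mat" where
  "assign_mat l m f = mat l m (\<lambda>(k, c). if c = f k then 1 else 0)"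

definition fiber_card :: "nat \<Rightarrow> (nat \<Rightarrow> nat) \<Rightarrow> nat \<Rightarrow> nat" where
  "fiber_card l f c = card {k. k < l \<and> f k = c}"

lemma fiber_card_pos: "c \<in> f ` {..<l} \<Longrightarrow> fiber_card l f c > 0"
  by (auto simp: fiber_card_def card_gt_0_iff)

lemma sum_indicator_eq_fiber_card:
  "(\<Sum>k<l. if c = f k then 1 else 0 :: real) = real (fiber_card l f c)"
proof -
  have "{..<l} \<inter> {k. c = f k} = {k. k < l \<and> f k = c}"
    by auto
  then show ?thesis
    by (simp add: sum.If_cases fiber_card_def)
qed

lemma in_VV_row_unit:
  assumes V: "in_VV ms m V" and k: "k < sum_list ms"
  obtains c where "c < m" "\<And>c'. c' < m \<Longrightarrow> V $$ (k, c') = (if c' = c then 1 else 0)"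
proof -
  obtain i r where i: "i < length ms" and r: "r < ms ! i" and kr: "k = offs ms i + r"
    using index_in_block[OF k] .
  let ?B = "rowblk ms V i"
  have B: "lifting_perm_mat ?B" "dim_row ?B = ms ! i" "dim_col ?B = m" "dim_col V = m"
    using V i by (auto simp: in_VV_def rowblk_def)
  have entry: "?B $$ (r, c) = V $$ (k, c)" if "c < m" for c
    using r that B kr by (simp add: rowblk_def)
  have "{c. c < m \<and> V $$ (k, c) = 1} = {c. c < dim_col ?B \<and> ?B $$ (r, c) = 1}"
    using B entry by auto
  then have "card {c. c < m \<and> V $$ (k, c) = 1} = 1"
    using B r by (simp add: lifting_perm_mat_def)
  then obtain c where c: "{c. c < m \<and> V $$ (k, c) = 1} = {c}"
    by (rule card_1_singletonE)
  have "V $$ (k, c') \<in> {0, 1}" if "c' < m" for c'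
    using B r that entry[symmetric] by (auto simp: lifting_perm_mat_def zero_one_mat_def)
  with c show thesis
    by (intro that[of c]) auto
qed

lemma in_VV_eq_assign_mat:
  assumes V: "in_VV ms m V"
  obtains f where "V = assign_mat (sum_list ms) m f" "f ` {..<sum_list ms} = {..<m}"
proof -
  let ?l = "sum_list ms"
  have "\<forall>k\<in>{..<?l}. \<exists>c. c < m \<and> (\<forall>c'<m. V $$ (k, c') = (if c' = c then 1 else 0))"
    using in_VV_row_unit[OF V] by (metis lessThan_iff)
  then obtain f where f: "\<And>k. k < ?l \<Longrightarrow> f k < m"
    and row: "\<And>k c. k < ?l \<Longrightarrow> c < m \<Longrightarrow> V $$ (k, c) = (if c = f k then 1 else 0)"
    by (auto dest!: bchoice)
  have VA: "V = assign_mat ?l m f"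
    using V row by (intro eq_matI) (auto simp: in_VV_def assign_mat_def)
  have "c \<in> f ` {..<?l}" if "c < m" for c
  proof -
    obtain k where "k < ?l" "V $$ (k, c) = 1"
      using V \<open>c < m\<close> by (auto simp: in_VV_def)
    with row[of k c] \<open>c < m\<close> show ?thesis
      by (auto split: if_splits)
  qed
  with f have "f ` {..<?l} = {..<m}" by auto
  with VA show thesis by (rule that)
qed

lemma assign_mat_gram:
  assumes "f ` {..<l} \<subseteq> {..<m}"
  shows "assign_mat l m f * (assign_mat l m f)\<^sup>T = mat l l (\<lambda>(k, k'). if f k = f k' then 1 else 0)"
proof (rule eq_matI)
  fix k k' assume "k < dim_row (mat l l (\<lambda>(k, k'). if f k = f k' then 1 else 0 :: real))"
    "k' < dim_col (mat l l (\<lambda>(k, k'). if f k = f k' then 1 else 0 :: real))"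
  then have kk: "k < l" "k' < l" by auto
  with assms have "f k < m" by auto
  have "(assign_mat l m f * (assign_mat l m f)\<^sup>T) $$ (k, k')
      = (\<Sum>c<m. (if c = f k then 1 else 0) * (if c = f k' then 1 else 0))"
    using kk by (simp add: assign_mat_def scalar_prod_def atLeast0LessThan)
  also have "\<dots> = (\<Sum>c<m. if c = f k then (if f k = f k' then 1 else 0) else 0)"
    by (rule sum.cong) auto
  also have "\<dots> = (if f k = f k' then 1 else 0)"
    using \<open>f k < m\<close> by simp
  finally show "(assign_mat l m f * (assign_mat l m f)\<^sup>T) $$ (k, k')
      = mat l l (\<lambda>(k, k'). if f k = f k' then 1 else 0) $$ (k, k')"
    using kk by simp
qed (auto simp: assign_mat_def)

lemma rowsum_diag_assign_gram:
  assumes "f ` {..<l} \<subseteq> {..<m}"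
  shows "rowsum_diag (assign_mat l m f * (assign_mat l m f)\<^sup>T)
    = mat_diag l (\<lambda>k. real (fiber_card l f (f k)))"
  unfolding assign_mat_gram[OF assms] rowsum_diag_eq_mat_diag
  by (rule eq_matI) (simp_all add: mat_diag_def sum_indicator_eq_fiber_card)

lemma U_of_assign_mat:
  assumes "f ` {..<l} \<subseteq> {..<m}"
  shows "U_of (assign_mat l m f)
    = mat l m (\<lambda>(k, c). if c = f k then 1 / sqrt (real (fiber_card l f (f k))) else 0)"
  unfolding U_of_def rowsum_diag_assign_gram[OF assms] diag_inv_sqrt_mat_diag
  by (subst mat_diag_mult_left[of _ l m]) (auto simp: assign_mat_def)

lemma U_of_assign_mat_orthonormal:
  assumes f: "f ` {..<l} = {..<m}"
  shows "(U_of (assign_mat l m f))\<^sup>T * U_of (assign_mat l m f) = 1\<^sub>m m"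
proof (rule eq_matI)
  fix c c' assume "c < dim_row (1\<^sub>m m :: real mat)" "c' < dim_col (1\<^sub>m m :: real mat)"
  then have cc: "c < m" "c' < m" by auto
  have pos: "fiber_card l f c > 0"
    using f cc fiber_card_pos[of c f l] by auto
  let ?x = "\<lambda>k. 1 / sqrt (real (fiber_card l f (f k)))"
  have "((U_of (assign_mat l m f))\<^sup>T * U_of (assign_mat l m f)) $$ (c, c')
      = (\<Sum>k<l. (if c = f k then ?x k else 0) * (if c' = f k then ?x k else 0))"
    using cc unfolding U_of_assign_mat[OF equalityD1[OF f]]
    by (simp add: scalar_prod_def atLeast0LessThan)
  also have "\<dots> = (\<Sum>k<l. (if c = c' then 1 / real (fiber_card l f c) else 0) * (if c = f k then 1 else 0))"
    by (rule sum.cong) (auto simp: real_sqrt_mult[symmetric])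
  also have "\<dots> = (if c = c' then 1 else 0)"
    using pos by (auto simp: sum_indicator_eq_fiber_card simp flip: sum_distrib_left)
  finally show "((U_of (assign_mat l m f))\<^sup>T * U_of (assign_mat l m f)) $$ (c, c') = 1\<^sub>m m $$ (c, c')"
    using cc by simp
qed (auto simp: U_of_assign_mat[OF equalityD1[OF f]])

lemma U_of_carrier: "W \<in> carrier_mat l m \<Longrightarrow> U_of W \<in> carrier_mat l m"
  unfolding U_of_def by (rule mult_carrier_mat) (auto simp: diag_inv_sqrt_def rowsum_diag_def)

lemma nrm_carrier: "A \<in> carrier_mat n n \<Longrightarrow> nrm A \<in> carrier_mat n n"
  unfolding nrm_def by (intro mult_carrier_mat) (auto simp: diag_inv_sqrt_def rowsum_diag_def)

lemma nrm_gram_eq_U_of: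
  assumes W: "W \<in> carrier_mat l m"
  shows "nrm (W * W\<^sup>T) = U_of W * (U_of W)\<^sup>T"
proof -
  define D where "D = diag_inv_sqrt (rowsum_diag (W * W\<^sup>T))"
  have DD: "D = mat_diag l (\<lambda>i. 1 / sqrt (\<Sum>k<l. (W * W\<^sup>T) $$ (i, k)))"
    using W by (simp add: D_def rowsum_diag_eq_mat_diag diag_inv_sqrt_mat_diag)
  have D: "D \<in> carrier_mat l l" and DT: "D\<^sup>T = D"
    by (simp_all add: DD)
  have WT: "W\<^sup>T \<in> carrier_mat m l" and WWT: "W * W\<^sup>T \<in> carrier_mat l l"
    using W by simp_all
  have "U_of W * (U_of W)\<^sup>T = D * W * (W\<^sup>T * D)"
    using W D by (simp add: U_of_def D_def[symmetric] transpose_mult DT)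
  also have "\<dots> = D * (W * (W\<^sup>T * D))"
    using D W mult_carrier_mat[OF WT D] by (rule assoc_mult_mat)
  also have "W * (W\<^sup>T * D) = W * W\<^sup>T * D"
    using W WT D by (rule assoc_mult_mat[symmetric])
  also have "D * (W * W\<^sup>T * D) = D * (W * W\<^sup>T) * D"
    using D WWT D by (rule assoc_mult_mat[symmetric])
  finally show ?thesis
    by (simp add: nrm_def D_def)
qed

lemma partial_perm_mat_indicator:
  assumes "\<And>r. r < a \<Longrightarrow> card {s. s < b \<and> h s = g r} \<le> 1"
    and "\<And>s. s < b \<Longrightarrow> card {r. r < a \<and> g r = h s} \<le> 1"
  shows "partial_perm_mat (mat a b (\<lambda>(r, s). if g r = h s then 1 else 0))"
proof -
  have "{s. s < b \<and> mat a b (\<lambda>(r, s). if g r = h s then 1 else 0 :: real) $$ (r, s) = 1}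
      = {s. s < b \<and> h s = g r}" if "r < a" for r
    using that by (auto split: if_splits)
  moreover have "{r. r < a \<and> mat a b (\<lambda>(r, s). if g r = h s then 1 else 0 :: real) $$ (r, s) = 1}
      = {r. r < a \<and> g r = h s}" if "s < b" for s
    using that by (auto split: if_splits)
  ultimately show ?thesis
    using assms by (auto simp: partial_perm_mat_def zero_one_mat_def)
qed

lemma in_VV_block_fiber_card_le_1:
  assumes V: "in_VV ms m (assign_mat (sum_list ms) m f)"
    and j: "j < length ms" and c: "c < m"
  shows "card {s. s < ms ! j \<and> f (offs ms j + s) = c} \<le> 1"
proof -
  let ?B = "rowblk ms (assign_mat (sum_list ms) m f) j"
  have "{s. s < dim_row ?B \<and> ?B $$ (s, c) = 1} = {s. s < ms ! j \<and> f (offs ms j + s) = c}"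
    using offs_add_nth_le_sum_list[OF j] c by (auto simp: rowblk_def assign_mat_def split: if_splits)
  moreover have "lifting_perm_mat ?B" and "dim_col ?B = m"
    using V j by (auto simp: in_VV_def rowblk_def)
  ultimately show ?thesis
    using c by (auto simp: lifting_perm_mat_def)
qed

lemma in_VV_imp_feasible1:
  assumes V: "in_VV ms m V"
  shows "feasible1 ms m V"
proof -
  obtain f where VA: "V = assign_mat (sum_list ms) m f" and f: "f ` {..<sum_list ms} = {..<m}"
    using in_VV_eq_assign_mat[OF V] .
  have fm: "f (offs ms i + r) < m" if "i < length ms" "r < ms ! i" for i r
    using f offs_add_nth_le_sum_list[OF that(1)] that(2) by auto
  have "partial_perm_mat (blk ms (V * V\<^sup>T) i j)" if ij: "i < length ms" "j < length ms" for i j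
  proof -
    have "blk ms (V * V\<^sup>T) i j = mat (ms ! i) (ms ! j)
        (\<lambda>(r, s). if f (offs ms i + r) = f (offs ms j + s) then 1 else 0)"
      using offs_add_nth_le_sum_list[OF ij(1)] offs_add_nth_le_sum_list[OF ij(2)]
      unfolding blk_def VA assign_mat_gram[OF equalityD1[OF f]] by (intro eq_matI) auto
    moreover have "card {s. s < ms ! j \<and> f (offs ms j + s) = f (offs ms i + r)} \<le> 1"
      if "r < ms ! i" for r
      using in_VV_block_fiber_card_le_1 V VA ij fm that by blast
    moreover have "card {r. r < ms ! i \<and> f (offs ms i + r) = f (offs ms j + s)} \<le> 1"
      if "s < ms ! j" for s
      using in_VV_block_fiber_card_le_1 V VA ij fm that by blast
    ultimately show ?thesis
      by (simp add: partial_perm_mat_indicator)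
  qed
  with V show ?thesis
    by (simp add: feasible1_def)
qed

lemma obj1_eq_minus_obj2:
  assumes W: "W \<in> carrier_mat l m" and Pt: "Pt \<in> carrier_mat l l"
    and lap: "lap_nrm Pt = 1\<^sub>m l - nrm Pt"
    and ortho: "(U_of W)\<^sup>T * U_of W = 1\<^sub>m m"
  shows "obj1 Pt W = real m - obj2 Pt (U_of W)"
proof -
  define U where "U = U_of W"
  define N where "N = nrm Pt"
  have U: "U \<in> carrier_mat l m" and UT: "U\<^sup>T \<in> carrier_mat m l"
    using U_of_carrier[OF W] by (simp_all add: U_def)
  have N: "N \<in> carrier_mat l l" and UTN: "U\<^sup>T * N \<in> carrier_mat m l"
    using nrm_carrier[OF Pt] UT by (simp_all add: N_def)
  have "obj1 Pt W = mtrace ((U * U\<^sup>T)\<^sup>T * N)"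
    by (simp add: obj1_def frob_def nrm_gram_eq_U_of[OF W] U_def N_def)
  also have "(U * U\<^sup>T)\<^sup>T = U * U\<^sup>T"
    using transpose_mult[OF U UT] by simp
  also have "U * U\<^sup>T * N = U * (U\<^sup>T * N)"
    using U UT N by (rule assoc_mult_mat)
  also have "mtrace \<dots> = mtrace (U\<^sup>T * N * U)"
    using U UTN by (rule mtrace_mult_comm)
  finally have obj1: "obj1 Pt W = mtrace (U\<^sup>T * N * U)" .
  have "U\<^sup>T * (1\<^sub>m l - N) = U\<^sup>T - U\<^sup>T * N"
    using mult_minus_distrib_mat[OF UT one_carrier_mat N] UT by simp
  then have "U\<^sup>T * (1\<^sub>m l - N) * U = U\<^sup>T * U - U\<^sup>T * N * U"
    using minus_mult_distrib_mat[OF UT UTN U] by simp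
  then have "obj2 Pt U = mtrace (1\<^sub>m m - U\<^sup>T * N * U)"
    using ortho by (simp add: obj2_def lap N_def U_def)
  also have "\<dots> = real m - mtrace (U\<^sup>T * N * U)"
    using mult_carrier_mat[OF UTN U] by (simp add: mtrace_minus[of _ m])
  finally show ?thesis
    using obj1 by (simp add: U_def)
qed

lemma rowsum_pos_if_diag_blocks_one:
  assumes Pt: "Pt \<in> carrier_mat (sum_list ms) (sum_list ms)" and "zero_one_mat Pt"
    and diag: "\<forall>i<length ms. blk ms Pt i i = 1\<^sub>m (ms ! i)"
    and k: "k < sum_list ms"
  shows "(\<Sum>j<sum_list ms. Pt $$ (k, j)) > 0"
proof -
  obtain i r where i: "i < length ms" and r: "r < ms ! i" and kr: "k = offs ms i + r"
    using index_in_block[OF k] .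
  have "Pt $$ (k, k) = blk ms Pt i i $$ (r, r)"
    using r kr by (simp add: blk_def)
  also have "\<dots> = 1"
    using diag i r by simp
  finally have one: "Pt $$ (k, k) = 1" .
  have "0 \<le> Pt $$ (k, j)" if "j < sum_list ms" for j
  proof -
    have "Pt $$ (k, j) \<in> {0, 1}"
      using \<open>zero_one_mat Pt\<close> Pt k that by (simp add: zero_one_mat_def)
    then show ?thesis by auto
  qed
  then have "Pt $$ (k, k) \<le> (\<Sum>j<sum_list ms. Pt $$ (k, j))"
    using k by (intro member_le_sum) auto
  with one show ?thesis by simp
qed

theorem proposition2:
  fixes ms :: "nat list" and m :: nat and Pt V :: "real mat"
  assumes Pt_dim: "Pt \<in> carrier_mat (sum_list ms) (sum_list ms)"
    and Pt_01: "zero_one_mat Pt"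
    and Pt_diag: "\<forall>i<length ms. blk ms Pt i i = 1\<^sub>m (ms ! i)"
    and V: "in_VV ms m V"
  shows "((feasible1 ms m V \<and> (\<forall>W. feasible1 ms m W \<longrightarrow> obj1 Pt W \<le> obj1 Pt V))
           \<longleftrightarrow> (U_of V \<in> UU ms m \<and> (\<forall>U'\<in>UU ms m. obj2 Pt (U_of V) \<le> obj2 Pt U')))
         \<and> (\<forall>U\<in>UU ms m. U\<^sup>T * U = 1\<^sub>m m)"
proof -
  let ?l = "sum_list ms"
  have lap: "lap_nrm Pt = 1\<^sub>m ?l - nrm Pt"
    using Pt_dim rowsum_pos_if_diag_blocks_one[OF Pt_dim Pt_01 Pt_diag]
    by (rule lap_nrm_eq_one_minus_nrm)
  have ortho: "(U_of W)\<^sup>T * U_of W = 1\<^sub>m m" if "in_VV ms m W" for W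
    using in_VV_eq_assign_mat[OF that] U_of_assign_mat_orthonormal by metis
  have obj: "obj1 Pt W = real m - obj2 Pt (U_of W)" if "in_VV ms m W" for W
    using that ortho[OF that] Pt_dim lap
    by (intro obj1_eq_minus_obj2[of W ?l m]) (auto simp: in_VV_def)
  have feasible: "feasible1 ms m W \<longleftrightarrow> in_VV ms m W" for W
    using in_VV_imp_feasible1 feasible1_def by blast
  have optimal: "(\<forall>W. in_VV ms m W \<longrightarrow> obj1 Pt W \<le> obj1 Pt V)
      \<longleftrightarrow> (\<forall>W. in_VV ms m W \<longrightarrow> obj2 Pt (U_of V) \<le> obj2 Pt (U_of W))"
    using V by (simp add: obj)
  have UU: "UU ms m = U_of ` Collect (in_VV ms m)"
    by (auto simp: UU_def)
  show ?thesis
    unfolding feasible optimal UU using V ortho by blast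
qed

end
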